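(* Let $A=(a_{ij})_{1\le i,j\le n}$ be a real Nekrasov matrix with $a_{ii}>0$ for all $i$. Let $k$ be the smallest index such that $a_{kj}=0$ for all $j>k$, and let $\epsilon_1,\dots,\epsilon_n$ be real numbers with $\epsilon_i=0$ for $i<k$ and, for $i=k,\dots,n$, $0<\epsilon_i<a_{ii}-h_i(A)$ and $\epsilon_i>\sum_{j=k}^{i-1}\frac{|a_{ij}|\epsilon_j}{a_{jj}}$. Let $s_i:=\frac{h_i(A)+\epsilon_i}{a_{ii}}$, $w_i:=\sum_{j=1}^{i-1}|a_{ij}|\frac{\epsilon_j}{a_{jj}}$ and $p_i:=\sum_{j=i+1}^{n}|a_{ij}|\frac{a_{jj}-h_j(A)-\epsilon_j}{a_{jj}}$ for $i\in N$. Then $$\max_{d\in[0,1]^n}\|(I-D+DA)^{-1}\|_\infty\le \max\left\{\frac{1}{\min_{i}(\epsilon_i-w_i+p_i)},\ \frac{1}{\min_i s_i}\right\},$$ where for $d=(d_1,\dots,d_n)\in[0,1]^n$, $D=\mathrm{diag}(d_1,\dots,d_n)$ and $I$ is the $n\times n$ identity matrix.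
   Context: For a real $n\times n$ matrix $A=(a_{ij})$ with $a_{ii}\ne 0$ for all $i$, define recursively $h_1(A):=\sum_{j\ne 1}|a_{1j}|$ and $h_i(A):=\sum_{j=1}^{i-1}|a_{ij}|\frac{h_j(A)}{|a_{jj}|}+\sum_{j=i+1}^{n}|a_{ij}|$ for $i=2,\dots,n$. $A$ is a Nekrasov matrix if $|a_{ii}|>h_i(A)$ for all $i\in N=\{1,\dots,n\}$. $\|\cdot\|_\infty$ is the maximum absolute row sum norm. (The matrices $I-D+DA$ are nonsingular for all such $D$.) *)

theory Defs
  imports Complex_Main
begin

text \<open>n x n real matrices are represented as functions nat => nat => real,
  with indices ranging over 1..n (entries outside are irrelevant).\<close>

function nek_h :: "(nat \<Rightarrow> nat \<Rightarrow> real) \<Rightarrow> nat \<Rightarrow> nat \<Rightarrow> real" where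
  "nek_h A n i =
     (\<Sum>j\<in>{1..<i}. \<bar>A i j\<bar> * nek_h A n j / \<bar>A j j\<bar>) + (\<Sum>j\<in>{i<..n}. \<bar>A i j\<bar>)"
  by auto
termination
  by (relation "measure (\<lambda>(A, n, i). i)") auto

text \<open>Note: for i = 1 the first sum is empty, so nek_h A n 1 = sum over j in 2..n of |a_1j|,
  matching the paper's h_1.\<close>

definition nekrasov :: "nat \<Rightarrow> (nat \<Rightarrow> nat \<Rightarrow> real) \<Rightarrow> bool" where
  "nekrasov n A \<longleftrightarrow> (\<forall>i\<in>{1..n}. A i i \<noteq> 0 \<and> \<bar>A i i\<bar> > nek_h A n i)"

definition inf_norm :: "nat \<Rightarrow> (nat \<Rightarrow> nat \<Rightarrow> real) \<Rightarrow> real" where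
  "inf_norm n X = Max ((\<lambda>i. \<Sum>j\<in>{1..n}. \<bar>X i j\<bar>) ` {1..n})"

definition mat_mult :: "nat \<Rightarrow> (nat \<Rightarrow> nat \<Rightarrow> real) \<Rightarrow> (nat \<Rightarrow> nat \<Rightarrow> real) \<Rightarrow> (nat \<Rightarrow> nat \<Rightarrow> real)" where
  "mat_mult n X Y = (\<lambda>i j. \<Sum>l\<in>{1..n}. X i l * Y l j)"

definition id_mat :: "nat \<Rightarrow> nat \<Rightarrow> real" where
  "id_mat = (\<lambda>i j. if i = j then 1 else 0)"

definition IDDA :: "(nat \<Rightarrow> real) \<Rightarrow> (nat \<Rightarrow> nat \<Rightarrow> real) \<Rightarrow> (nat \<Rightarrow> nat \<Rightarrow> real)" where
  "IDDA d A = (\<lambda>i j. id_mat i j - d i * id_mat i j + d i * A i j)"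

definition is_inverse :: "nat \<Rightarrow> (nat \<Rightarrow> nat \<Rightarrow> real) \<Rightarrow> (nat \<Rightarrow> nat \<Rightarrow> real) \<Rightarrow> bool" where
  "is_inverse n M X \<longleftrightarrow>
     (\<forall>i\<in>{1..n}. \<forall>j\<in>{1..n}. mat_mult n M X i j = id_mat i j \<and> mat_mult n X M i j = id_mat i j)"

end

theory Submission
  imports Defs
begin

text \<open>Scale the columns of A by s(i) = (h(i) + \<epsilon>(i)) / a(i,i), which lies in (0,1]. The scaled matrix
  is strictly diagonally dominant, row i having margin exactly \<epsilon>(i) - w(i) + p(i), and scaling
  I - D + DA in the same way gives row i the convex combination (1 - d(i)) s(i) + d(i) (\<epsilon>(i) - w(i) + p(i))
  as margin, which is at least the minimum m of all s(i) and all \<epsilon>(i) - w(i) + p(i). A Varah-type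
  estimate then bounds every row sum of the inverse by s(i) / m \<le> 1 / m.\<close>

declare nek_h.simps[simp del]

definition row_margin :: "nat \<Rightarrow> (nat \<Rightarrow> nat \<Rightarrow> real) \<Rightarrow> (nat \<Rightarrow> real) \<Rightarrow> nat \<Rightarrow> real" where
  "row_margin n M s i = \<bar>M i i\<bar> * s i - (\<Sum>j\<in>{1..n}-{i}. \<bar>M i j\<bar> * s j)"

definition nek_scale :: "(nat \<Rightarrow> nat \<Rightarrow> real) \<Rightarrow> nat \<Rightarrow> (nat \<Rightarrow> real) \<Rightarrow> nat \<Rightarrow> real" where
  "nek_scale A n \<epsilon> i = (nek_h A n i + \<epsilon> i) / A i i"

definition nek_margin :: "(nat \<Rightarrow> nat \<Rightarrow> real) \<Rightarrow> nat \<Rightarrow> (nat \<Rightarrow> real) \<Rightarrow> nat \<Rightarrow> real" where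
  "nek_margin A n \<epsilon> i = \<epsilon> i - (\<Sum>j\<in>{1..<i}. \<bar>A i j\<bar> * \<epsilon> j / A j j)
     + (\<Sum>j\<in>{i<..n}. \<bar>A i j\<bar> * (A j j - nek_h A n j - \<epsilon> j) / A j j)"

lemma row_margin_le_abs_mult:
  fixes M :: "nat \<Rightarrow> nat \<Rightarrow> real" and s y :: "nat \<Rightarrow> real"
  assumes p: "p \<in> {1..n}" and s_pos: "\<forall>j\<in>{1..n}. 0 < s j"
    and p_max: "\<forall>j\<in>{1..n}. \<bar>y j / s j\<bar> \<le> \<bar>y p / s p\<bar>"
  shows "row_margin n M s p * \<bar>y p / s p\<bar> \<le> \<bar>\<Sum>j\<in>{1..n}. M p j * y j\<bar>"
proof -
  define Z where "Z = \<bar>y p / s p\<bar>"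
  have y_le: "\<bar>y j\<bar> \<le> s j * Z" if "j \<in> {1..n}" for j
  proof -
    have "s j > 0" using s_pos that by blast
    then have "\<bar>y j\<bar> = s j * \<bar>y j / s j\<bar>" by (simp add: abs_divide)
    also have "\<dots> \<le> s j * Z" using p_max that \<open>s j > 0\<close> unfolding Z_def
      by (intro mult_left_mono) (auto simp del: abs_divide)
    finally show ?thesis .
  qed
  have "s p > 0" using s_pos p by blast
  then have y_p: "\<bar>y p\<bar> = s p * Z" unfolding Z_def by (simp add: abs_divide)
  have off_diag: "\<bar>\<Sum>j\<in>{1..n}-{p}. M p j * y j\<bar> \<le> Z * (\<Sum>j\<in>{1..n}-{p}. \<bar>M p j\<bar> * s j)"
  proof -
    have "\<bar>\<Sum>j\<in>{1..n}-{p}. M p j * y j\<bar> \<le> (\<Sum>j\<in>{1..n}-{p}. \<bar>M p j\<bar> * \<bar>y j\<bar>)"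
      using sum_abs[of "\<lambda>j. M p j * y j"] by (simp add: abs_mult)
    also have "\<dots> \<le> (\<Sum>j\<in>{1..n}-{p}. \<bar>M p j\<bar> * (s j * Z))"
      using y_le by (intro sum_mono mult_left_mono) auto
    finally show ?thesis by (simp add: sum_distrib_left algebra_simps)
  qed
  have "(\<Sum>j\<in>{1..n}. M p j * y j) = M p p * y p + (\<Sum>j\<in>{1..n}-{p}. M p j * y j)"
    using p by (simp add: sum.remove)
  then have "\<bar>M p p * y p\<bar> \<le> \<bar>\<Sum>j\<in>{1..n}. M p j * y j\<bar> + \<bar>\<Sum>j\<in>{1..n}-{p}. M p j * y j\<bar>"
    using abs_triangle_ineq4[of "M p p * y p + (\<Sum>j\<in>{1..n}-{p}. M p j * y j)"] by simp
  then have "\<bar>M p p\<bar> * \<bar>y p\<bar> - Z * (\<Sum>j\<in>{1..n}-{p}. \<bar>M p j\<bar> * s j) \<le> \<bar>\<Sum>j\<in>{1..n}. M p j * y j\<bar>"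
    using off_diag by (simp add: abs_mult)
  then show ?thesis unfolding row_margin_def Z_def[symmetric] y_p by (simp add: algebra_simps)
qed

text \<open>Multiplying M X = I by the sign vector of row i of X produces a vector y with
  y(i) = \<Sum>j |X(i,j)| and |M y| \<le> 1 componentwise.\<close>

lemma right_inverse_row_sum_le:
  fixes M X :: "nat \<Rightarrow> nat \<Rightarrow> real" and s :: "nat \<Rightarrow> real"
  assumes i: "i \<in> {1..n}" and s_pos: "\<forall>j\<in>{1..n}. 0 < s j" and "m > 0"
    and margin: "\<forall>j\<in>{1..n}. m \<le> row_margin n M s j"
    and right_inverse: "\<forall>l\<in>{1..n}. \<forall>j\<in>{1..n}. mat_mult n M X l j = id_mat l j"
  shows "(\<Sum>j\<in>{1..n}. \<bar>X i j\<bar>) \<le> s i / m"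
proof -
  define y where "y = (\<lambda>l. \<Sum>j\<in>{1..n}. X l j * sgn (X i j))"
  have My: "(\<Sum>j\<in>{1..n}. M l j * y j) = sgn (X i l)" if l: "l \<in> {1..n}" for l
  proof -
    have "(\<Sum>j\<in>{1..n}. M l j * y j) = (\<Sum>j\<in>{1..n}. mat_mult n M X l j * sgn (X i j))"
      unfolding y_def mat_mult_def sum_distrib_left sum_distrib_right
      by (subst sum.swap) (simp add: mult.assoc)
    also have "\<dots> = (\<Sum>j\<in>{1..n}. if l = j then sgn (X i l) else 0)"
      using right_inverse l by (intro sum.cong) (auto simp: id_mat_def)
    finally show ?thesis using l by simp
  qed
  obtain p where p: "p \<in> {1..n}" "\<forall>j\<in>{1..n}. \<bar>y j / s j\<bar> \<le> \<bar>y p / s p\<bar>"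
  proof -
    have "Max ((\<lambda>j. \<bar>y j / s j\<bar>) ` {1..n}) \<in> (\<lambda>j. \<bar>y j / s j\<bar>) ` {1..n}"
      using i by (intro Max_in) auto
    then obtain p where "p \<in> {1..n}" "\<bar>y p / s p\<bar> = Max ((\<lambda>j. \<bar>y j / s j\<bar>) ` {1..n})" by auto
    then show ?thesis using that by auto
  qed
  have "m * \<bar>y p / s p\<bar> \<le> row_margin n M s p * \<bar>y p / s p\<bar>"
    using margin p(1) by (intro mult_right_mono) auto
  also have "\<dots> \<le> \<bar>\<Sum>j\<in>{1..n}. M p j * y j\<bar>"
    using p s_pos by (intro row_margin_le_abs_mult)
  also have "\<dots> \<le> 1" using My[OF p(1)] by (simp add: sgn_if)
  finally have y_p: "\<bar>y p / s p\<bar> \<le> 1 / m" using \<open>m > 0\<close> by (simp add: field_simps)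
  have "s i > 0" using s_pos i by blast
  have "(\<Sum>j\<in>{1..n}. \<bar>X i j\<bar>) = y i" unfolding y_def by (intro sum.cong) (auto simp: sgn_if)
  also have "\<dots> \<le> s i * \<bar>y i / s i\<bar>" using \<open>s i > 0\<close> by (simp add: abs_divide)
  also have "\<dots> \<le> s i * (1 / m)"
  proof (rule mult_left_mono)
    show "\<bar>y i / s i\<bar> \<le> 1 / m" using p(2) i y_p by (meson order_trans)
  qed (use \<open>s i > 0\<close> in simp)
  finally show ?thesis by simp
qed

lemma row_margin_IDDA:
  fixes A :: "nat \<Rightarrow> nat \<Rightarrow> real" and d s :: "nat \<Rightarrow> real"
  assumes "i \<in> {1..n}" and "0 \<le> d i" "d i \<le> 1" and "0 \<le> A i i"
  shows "row_margin n (IDDA d A) s i = (1 - d i) * s i + d i * row_margin n A s i"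
proof -
  have diag: "\<bar>IDDA d A i i\<bar> = 1 - d i + d i * A i i"
    using assms by (simp add: IDDA_def id_mat_def)
  have "\<bar>A i i\<bar> = A i i" using assms(4) by simp
  have off_diag: "(\<Sum>j\<in>{1..n}-{i}. \<bar>IDDA d A i j\<bar> * s j) = d i * (\<Sum>j\<in>{1..n}-{i}. \<bar>A i j\<bar> * s j)"
    using assms by (simp add: sum_distrib_left IDDA_def id_mat_def abs_mult mult.assoc)
  show ?thesis unfolding row_margin_def diag off_diag \<open>\<bar>A i i\<bar> = A i i\<close> by (simp add: algebra_simps)
qed

lemma row_margin_IDDA_ge:
  fixes A :: "nat \<Rightarrow> nat \<Rightarrow> real" and d s :: "nat \<Rightarrow> real"
  assumes "i \<in> {1..n}" and "0 \<le> d i" "d i \<le> 1" and "0 \<le> A i i"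
    and "m \<le> s i" and "m \<le> row_margin n A s i"
  shows "m \<le> row_margin n (IDDA d A) s i"
proof -
  have "(1 - d i) * m + d i * m \<le> (1 - d i) * s i + d i * row_margin n A s i"
    using assms by (intro add_mono mult_left_mono) auto
  then show ?thesis using assms(1-4) by (simp add: row_margin_IDDA algebra_simps)
qed

lemma inf_norm_inverse_le:
  fixes M X :: "nat \<Rightarrow> nat \<Rightarrow> real" and s :: "nat \<Rightarrow> real"
  assumes "n \<ge> 1" and s: "\<forall>j\<in>{1..n}. 0 < s j \<and> s j \<le> 1" and "m > 0"
    and margin: "\<forall>j\<in>{1..n}. m \<le> row_margin n M s j"
    and inv: "is_inverse n M X"
  shows "inf_norm n X \<le> 1 / m"
proof -
  have "(\<Sum>j\<in>{1..n}. \<bar>X i j\<bar>) \<le> 1 / m" if i: "i \<in> {1..n}" for i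
  proof -
    have "(\<Sum>j\<in>{1..n}. \<bar>X i j\<bar>) \<le> s i / m"
      using s margin inv \<open>m > 0\<close> by (intro right_inverse_row_sum_le[OF i]) (auto simp: is_inverse_def)
    also have "\<dots> \<le> 1 / m" using s i \<open>m > 0\<close> by (intro divide_right_mono) auto
    finally show ?thesis .
  qed
  then show ?thesis using \<open>n \<ge> 1\<close> by (simp add: inf_norm_def)
qed

lemma nek_h_nonneg: "nek_h A n i \<ge> 0"
proof (induction i rule: less_induct)
  case (less i)
  then have "(\<Sum>j\<in>{1..<i}. \<bar>A i j\<bar> * nek_h A n j / \<bar>A j j\<bar>) \<ge> 0"
    by (intro sum_nonneg) (auto intro!: divide_nonneg_nonneg mult_nonneg_nonneg)
  moreover have "(\<Sum>j\<in>{i<..n}. \<bar>A i j\<bar>) \<ge> 0" by (intro sum_nonneg) auto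
  ultimately show ?case by (subst nek_h.simps) linarith
qed

lemma nek_h_pos:
  assumes "j \<in> {i<..n}" and "A i j \<noteq> 0"
  shows "nek_h A n i > 0"
proof -
  have "(\<Sum>j\<in>{1..<i}. \<bar>A i j\<bar> * nek_h A n j / \<bar>A j j\<bar>) \<ge> 0"
    by (intro sum_nonneg divide_nonneg_nonneg mult_nonneg_nonneg nek_h_nonneg) auto
  moreover have "(\<Sum>j\<in>{i<..n}. \<bar>A i j\<bar>) > 0"
    using assms by (intro sum_pos2[of _ j]) auto
  ultimately show ?thesis by (subst nek_h.simps) linarith
qed

lemma row_margin_nek_scale:
  fixes A :: "nat \<Rightarrow> nat \<Rightarrow> real" and \<epsilon> :: "nat \<Rightarrow> real"
  assumes i: "i \<in> {1..n}" and diag_pos: "\<forall>j\<in>{1..n}. A j j > 0"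
  shows "row_margin n A (nek_scale A n \<epsilon>) i = nek_margin A n \<epsilon> i"
proof -
  have pos_lower: "A j j > 0" if "j \<in> {1..<i}" for j using that i diag_pos by auto
  have pos_upper: "A j j > 0" if "j \<in> {i<..n}" for j using that i diag_pos by auto
  have off_diag: "{1..n}-{i} = {1..<i} \<union> {i<..n}" using i by auto
  have split: "(\<Sum>j\<in>{1..n}-{i}. \<bar>A i j\<bar> * nek_scale A n \<epsilon> j)
      = (\<Sum>j\<in>{1..<i}. \<bar>A i j\<bar> * nek_scale A n \<epsilon> j) + (\<Sum>j\<in>{i<..n}. \<bar>A i j\<bar> * nek_scale A n \<epsilon> j)"
    unfolding off_diag by (rule sum.union_disjoint) auto
  have "(\<Sum>j\<in>{1..<i}. \<bar>A i j\<bar> * nek_h A n j / \<bar>A j j\<bar>) = (\<Sum>j\<in>{1..<i}. \<bar>A i j\<bar> * nek_h A n j / A j j)"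
    using pos_lower by (intro sum.cong refl) (simp add: abs_of_pos)
  then have h: "nek_h A n i = (\<Sum>j\<in>{1..<i}. \<bar>A i j\<bar> * nek_h A n j / A j j) + (\<Sum>j\<in>{i<..n}. \<bar>A i j\<bar>)"
    by (subst nek_h.simps) simp
  have lower: "(\<Sum>j\<in>{1..<i}. \<bar>A i j\<bar> * nek_scale A n \<epsilon> j)
      = (\<Sum>j\<in>{1..<i}. \<bar>A i j\<bar> * nek_h A n j / A j j) + (\<Sum>j\<in>{1..<i}. \<bar>A i j\<bar> * \<epsilon> j / A j j)"
    unfolding sum.distrib[symmetric] nek_scale_def by (intro sum.cong) (simp_all add: add_divide_distrib algebra_simps)
  have upper: "(\<Sum>j\<in>{i<..n}. \<bar>A i j\<bar>) - (\<Sum>j\<in>{i<..n}. \<bar>A i j\<bar> * nek_scale A n \<epsilon> j)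
      = (\<Sum>j\<in>{i<..n}. \<bar>A i j\<bar> * (A j j - nek_h A n j - \<epsilon> j) / A j j)"
    unfolding sum_subtractf[symmetric] nek_scale_def
  proof (rule sum.cong)
    fix j assume "j \<in> {i<..n}"
    then have "A j j > 0" by (rule pos_upper)
    then show "\<bar>A i j\<bar> - \<bar>A i j\<bar> * ((nek_h A n j + \<epsilon> j) / A j j) = \<bar>A i j\<bar> * (A j j - nek_h A n j - \<epsilon> j) / A j j"
      by (simp add: field_simps)
  qed simp
  have "A i i > 0" using i diag_pos by blast
  then have "\<bar>A i i\<bar> * nek_scale A n \<epsilon> i = nek_h A n i + \<epsilon> i" by (simp add: nek_scale_def)
  then show ?thesis
    unfolding row_margin_def nek_margin_def split using h lower upper by linarith
qed

lemma nek_slack_pos: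
  assumes "nekrasov n A" and diag_pos: "\<forall>i\<in>{1..n}. A i i > 0"
    and eps_zero: "\<forall>i\<in>{1..<k}. \<epsilon> i = 0"
    and eps_bounds: "\<forall>i\<in>{k..n}. 0 < \<epsilon> i \<and> \<epsilon> i < A i i - nek_h A n i"
    and j: "j \<in> {1..n}"
  shows "0 < A j j - nek_h A n j - \<epsilon> j"
proof (cases "j < k")
  case True
  then have "\<epsilon> j = 0" using eps_zero j by auto
  moreover have "nek_h A n j < \<bar>A j j\<bar>" "A j j > 0"
    using \<open>nekrasov n A\<close> diag_pos j by (auto simp: nekrasov_def)
  ultimately show ?thesis by simp
next
  case False
  then show ?thesis using eps_bounds j by auto
qed

lemma nek_scale_pos_le_one:
  assumes "nekrasov n A" and diag_pos: "\<forall>i\<in>{1..n}. A i i > 0"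
    and nonzero_right: "\<forall>k'\<in>{1..<k}. \<exists>j\<in>{k'<..n}. A k' j \<noteq> 0"
    and eps_zero: "\<forall>i\<in>{1..<k}. \<epsilon> i = 0"
    and eps_bounds: "\<forall>i\<in>{k..n}. 0 < \<epsilon> i \<and> \<epsilon> i < A i i - nek_h A n i"
    and i: "i \<in> {1..n}"
  shows "0 < nek_scale A n \<epsilon> i" and "nek_scale A n \<epsilon> i \<le> 1"
proof -
  have "0 < nek_h A n i + \<epsilon> i"
  proof (cases "i < k")
    case True
    then obtain j where "j \<in> {i<..n}" "A i j \<noteq> 0" using nonzero_right i by force
    then have "0 < nek_h A n i" by (rule nek_h_pos)
    then show ?thesis using eps_zero True i by simp
  next
    case False
    then have "0 < \<epsilon> i" using eps_bounds i by auto
    then show ?thesis using nek_h_nonneg[of A n i] by linarith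
  qed
  moreover have "nek_h A n i + \<epsilon> i < A i i"
    using nek_slack_pos[OF assms(1,2,4,5) i] by linarith
  ultimately show "0 < nek_scale A n \<epsilon> i" and "nek_scale A n \<epsilon> i \<le> 1"
    using diag_pos i by (auto simp: nek_scale_def)
qed

lemma nek_margin_pos:
  assumes "nekrasov n A" and diag_pos: "\<forall>i\<in>{1..n}. A i i > 0" and "1 \<le> k"
    and nonzero_right: "\<forall>k'\<in>{1..<k}. \<exists>j\<in>{k'<..n}. A k' j \<noteq> 0"
    and eps_zero: "\<forall>i\<in>{1..<k}. \<epsilon> i = 0"
    and eps_bounds: "\<forall>i\<in>{k..n}. 0 < \<epsilon> i \<and> \<epsilon> i < A i i - nek_h A n i"
    and eps_dominates: "\<forall>i\<in>{k..n}. \<epsilon> i > (\<Sum>j\<in>{k..<i}. \<bar>A i j\<bar> * \<epsilon> j / A j j)"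
    and i: "i \<in> {1..n}"
  shows "0 < nek_margin A n \<epsilon> i"
proof -
  note slack_pos = nek_slack_pos[OF \<open>nekrasov n A\<close> diag_pos eps_zero eps_bounds]
  have term_nonneg: "0 \<le> \<bar>A i j\<bar> * (A j j - nek_h A n j - \<epsilon> j) / A j j" if "j \<in> {i<..n}" for j
    using that i diag_pos slack_pos[of j] by (simp add: less_imp_le)
  define p where "p = (\<Sum>j\<in>{i<..n}. \<bar>A i j\<bar> * (A j j - nek_h A n j - \<epsilon> j) / A j j)"
  have p_nonneg: "0 \<le> p" unfolding p_def using term_nonneg by (intro sum_nonneg)
  have w_eq: "(\<Sum>j\<in>{1..<i}. \<bar>A i j\<bar> * \<epsilon> j / A j j) = (\<Sum>j\<in>{k..<i}. \<bar>A i j\<bar> * \<epsilon> j / A j j)"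
    using eps_zero \<open>1 \<le> k\<close> by (intro sum.mono_neutral_right) auto
  show ?thesis
  proof (cases "i < k")
    case True
    then obtain j where j: "j \<in> {i<..n}" "A i j \<noteq> 0" using nonzero_right i by force
    have "0 < \<bar>A i j\<bar> * (A j j - nek_h A n j - \<epsilon> j) / A j j"
      using i j diag_pos slack_pos[of j] by simp
    then have "0 < p" unfolding p_def using j term_nonneg by (intro sum_pos2[of _ j]) auto
    moreover have "(\<Sum>j\<in>{k..<i}. \<bar>A i j\<bar> * \<epsilon> j / A j j) = 0" using True by simp
    ultimately show ?thesis using eps_zero True i w_eq by (simp add: nek_margin_def p_def)
  next
    case False
    then have "(\<Sum>j\<in>{1..<i}. \<bar>A i j\<bar> * \<epsilon> j / A j j) < \<epsilon> i"
      using eps_dominates i w_eq by auto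
    then show ?thesis using p_nonneg unfolding nek_margin_def p_def by linarith
  qed
qed

lemma one_div_min: "(a::real) > 0 \<Longrightarrow> b > 0 \<Longrightarrow> 1 / min a b = max (1 / a) (1 / b)"
  by (cases "a \<le> b") (simp_all add: min_def divide_left_mono)

theorem theorem5p2:
  fixes n k :: nat and A :: "nat \<Rightarrow> nat \<Rightarrow> real" and \<epsilon> :: "nat \<Rightarrow> real"
  assumes "n \<ge> 1"
    and "nekrasov n A"
    and "\<forall>i\<in>{1..n}. A i i > 0"
    and "1 \<le> k" and "k \<le> n"
    and "\<forall>j\<in>{k<..n}. A k j = 0"
    and "\<forall>k'\<in>{1..<k}. \<exists>j\<in>{k'<..n}. A k' j \<noteq> 0"
    and "\<forall>i\<in>{1..<k}. \<epsilon> i = 0"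
    and "\<forall>i\<in>{k..n}. 0 < \<epsilon> i \<and> \<epsilon> i < A i i - nek_h A n i"
    and "\<forall>i\<in>{k..n}. \<epsilon> i > (\<Sum>j\<in>{k..<i}. \<bar>A i j\<bar> * \<epsilon> j / A j j)"
  shows
    "\<forall>d. (\<forall>i\<in>{1..n}. 0 \<le> d i \<and> d i \<le> 1) \<longrightarrow>
       (\<forall>X. is_inverse n (IDDA d A) X \<longrightarrow>
          inf_norm n X \<le>
            max (1 / Min ((\<lambda>i. \<epsilon> i - (\<Sum>j\<in>{1..<i}. \<bar>A i j\<bar> * \<epsilon> j / A j j)
                              + (\<Sum>j\<in>{i<..n}. \<bar>A i j\<bar> * (A j j - nek_h A n j - \<epsilon> j) / A j j)) ` {1..n}))
                (1 / Min ((\<lambda>i. (nek_h A n i + \<epsilon> i) / A i i) ` {1..n})))"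
proof (intro allI impI)
  fix d X
  assume d: "\<forall>i\<in>{1..n}. 0 \<le> d i \<and> d i \<le> 1" and inv: "is_inverse n (IDDA d A) X"
  let ?s = "nek_scale A n \<epsilon>" and ?\<beta> = "nek_margin A n \<epsilon>"
  have s: "0 < ?s i \<and> ?s i \<le> 1" if "i \<in> {1..n}" for i
    using nek_scale_pos_le_one[OF assms(2,3,7,8,9) that] by auto
  have \<beta>: "0 < ?\<beta> i" if "i \<in> {1..n}" for i
    using nek_margin_pos[OF assms(2,3,4,7,8,9,10) that] .
  define m where "m = min (Min (?\<beta> ` {1..n})) (Min (?s ` {1..n}))"
  have "m > 0" unfolding m_def using s \<beta> \<open>n \<ge> 1\<close> by auto
  have "m \<le> ?s i" "m \<le> ?\<beta> i" if "i \<in> {1..n}" for i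
    unfolding m_def using that by (simp_all add: min_le_iff_disj)
  then have "m \<le> row_margin n (IDDA d A) ?s i" if "i \<in> {1..n}" for i
    using that d assms(3) by (intro row_margin_IDDA_ge) (auto simp: row_margin_nek_scale less_imp_le)
  then have "inf_norm n X \<le> 1 / m"
    using inf_norm_inverse_le[OF \<open>n \<ge> 1\<close> _ \<open>m > 0\<close> _ inv] s by blast
  also have "1 / m = max (1 / Min (?\<beta> ` {1..n})) (1 / Min (?s ` {1..n}))"
    unfolding m_def using s \<beta> \<open>n \<ge> 1\<close> by (intro one_div_min) auto
  finally show "inf_norm n X \<le> max (1 / Min ((\<lambda>i. \<epsilon> i - (\<Sum>j\<in>{1..<i}. \<bar>A i j\<bar> * \<epsilon> j / A j j)
                              + (\<Sum>j\<in>{i<..n}. \<bar>A i j\<bar> * (A j j - nek_h A n j - \<epsilon> j) / A j j)) ` {1..n}))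
                (1 / Min ((\<lambda>i. (nek_h A n i + \<epsilon> i) / A i i) ` {1..n}))"
    unfolding nek_margin_def nek_scale_def .
qed

end
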